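(* Let $(E\to M,\rho,\langle\cdot,\cdot\rangle,\circ)$ be a Courant algebroid and $(\mathbf I,\mathbf J,\mathbf K)$ an almost hypercomplex structure on $E$. The following are equivalent: (i) $N_{\mathbf I,\mathbf I}=N_{\mathbf J,\mathbf J}=0$; (ii) $N_{\mathbf I,\mathbf J}=0$; (iii) $N_{\mathbf I,\mathbf I}=N_{\mathbf J,\mathbf J}=N_{\mathbf K,\mathbf K}=N_{\mathbf I,\mathbf J}=N_{\mathbf J,\mathbf K}=N_{\mathbf K,\mathbf I}=0$.
   Context: A Courant algebroid $(E\to M,\rho,\langle\cdot,\cdot\rangle,\circ)$ consists of a real vector bundle $E\to M$ over a smooth manifold, a nondegenerate symmetric fiberwise bilinear pairing $\langle\cdot,\cdot\rangle$ on $E$, a vector bundle map $\rho:E\to TM$ (the anchor), and an $\mathbb R$-bilinear operation $\circ$ on $\Gamma(E)$ (the Dorfman bracket) such that for all $f\in C^\infty(M)$, $x,y,z\in\Gamma(E)$: $x\circ(y\circ z)=(x\circ y)\circ z+y\circ(x\circ z)$; $\rho(x\circ y)=[\rho(x),\rho(y)]$; $x\circ(fy)=(\rho(x)f)y+f(x\circ y)$; $x\circ y+y\circ x=2D\langle x,y\rangle$; $(Df)\circ x=0$; $\rho(x)\langle y,z\rangle=\langle x\circ y,z\rangle+\langle y,x\circ z\rangle$. Here $D:C^\infty(M)\to\Gamma(E)$ is the $\mathbb R$-linear map defined by $\langle Df,x\rangle=\tfrac12\rho(x)f$. For vector bundle endomorphisms $F,G$ of $E$ (over $\mathrm{id}_M$),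 the Nijenhuis concomitant is the tensor $N_{F,G}:E\otimes E\to E$ given by $N_{F,G}(X,Y)=FX\circ GY-F(X\circ GY)-G(FX\circ Y)+FG(X\circ Y)+GX\circ FY-G(X\circ FY)-F(GX\circ Y)+GF(X\circ Y)$. An almost hypercomplex structure on $E$ is a triple $(\mathbf I,\mathbf J,\mathbf K)$ of vector bundle endomorphisms of $E$ over $\mathrm{id}_M$, each orthogonal for $\langle\cdot,\cdot\rangle$, with $\mathbf I^2=\mathbf J^2=\mathbf K^2=\mathbf I\mathbf J\mathbf K=-1$. *)

theory Defs
  imports Main "HOL.Real_Vector_Spaces"
begin

text \<open>Algebraic model of a Courant algebroid E \<rightarrow> M.
  'f plays the role of C-infinity(M) (a commutative real algebra with unit),
  'e plays the role of the space of sections Gamma(E) (a real vector space),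
  sm is the C-infinity(M)-module action f x = f x on sections,
  rho x is the vector field rho(x), acting on functions as a derivation,
  pr is the (fiberwise, hence C-infinity(M)-bilinear) pairing,
  dor is the Dorfman bracket.\<close>

definition Dop :: "('e \<Rightarrow> 'f::{comm_ring_1,real_algebra_1} \<Rightarrow> 'f) \<Rightarrow> ('e \<Rightarrow> 'e \<Rightarrow> 'f) \<Rightarrow> 'f \<Rightarrow> 'e"
  where "Dop rho pr f = (THE d. \<forall>x. pr d x = (1/2) *\<^sub>R rho x f)"

definition courant_algebroid ::
  "('f::{comm_ring_1,real_algebra_1} \<Rightarrow> 'e::real_vector \<Rightarrow> 'e) \<Rightarrow> ('e \<Rightarrow> 'f \<Rightarrow> 'f)
   \<Rightarrow> ('e \<Rightarrow> 'e \<Rightarrow> 'f) \<Rightarrow> ('e \<Rightarrow> 'e \<Rightarrow> 'e) \<Rightarrow> bool"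
  where "courant_algebroid sm rho pr dor \<longleftrightarrow>
    \<comment> \<open>sections form a module over the function algebra, compatible with real scaling\<close>
    (\<forall>f g x. sm (f + g) x = sm f x + sm g x) \<and>
    (\<forall>f x y. sm f (x + y) = sm f x + sm f y) \<and>
    (\<forall>f g x. sm (f * g) x = sm f (sm g x)) \<and>
    (\<forall>x. sm 1 x = x) \<and>
    (\<forall>r x. sm (of_real r) x = r *\<^sub>R x) \<and>
    \<comment> \<open>anchor: a bundle map E \<rightarrow> TM, i.e. function-linear into vector fields (derivations)\<close>
    (\<forall>x y g. rho (x + y) g = rho x g + rho y g) \<and>
    (\<forall>f x g. rho (sm f x) g = f * rho x g) \<and>
    (\<forall>x g h. rho x (g + h) = rho x g + rho x h) \<and>
    (\<forall>x r g. rho x (r *\<^sub>R g) = r *\<^sub>R rho x g) \<and>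
    (\<forall>x g h. rho x (g * h) = g * rho x h + h * rho x g) \<and>
    \<comment> \<open>pairing: symmetric, function-bilinear, nondegenerate\<close>
    (\<forall>x y. pr x y = pr y x) \<and>
    (\<forall>x y z. pr (x + y) z = pr x z + pr y z) \<and>
    (\<forall>f x y. pr (sm f x) y = f * pr x y) \<and>
    (\<forall>x. (\<forall>y. pr x y = 0) \<longrightarrow> x = 0) \<and>
    \<comment> \<open>Dorfman bracket: real-bilinear\<close>
    (\<forall>x y z. dor (x + y) z = dor x z + dor y z) \<and>
    (\<forall>x y z. dor x (y + z) = dor x y + dor x z) \<and>
    (\<forall>r x y. dor (r *\<^sub>R x) y = r *\<^sub>R dor x y) \<and>
    (\<forall>r x y. dor x (r *\<^sub>R y) = r *\<^sub>R dor x y) \<and>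
    \<comment> \<open>D is well defined (guaranteed geometrically by nondegeneracy)\<close>
    (\<forall>f. \<exists>d. \<forall>x. pr d x = (1/2) *\<^sub>R rho x f) \<and>
    \<comment> \<open>Courant algebroid axioms\<close>
    (\<forall>x y z. dor x (dor y z) = dor (dor x y) z + dor y (dor x z)) \<and>
    (\<forall>x y g. rho (dor x y) g = rho x (rho y g) - rho y (rho x g)) \<and>
    (\<forall>x f y. dor x (sm f y) = sm (rho x f) y + sm f (dor x y)) \<and>
    (\<forall>x y. dor x y + dor y x = 2 *\<^sub>R Dop rho pr (pr x y)) \<and>
    (\<forall>f x. dor (Dop rho pr f) x = 0) \<and>
    (\<forall>x y z. rho x (pr y z) = pr (dor x y) z + pr y (dor x z))"

definition bundle_endo :: "('f \<Rightarrow> 'e::ab_group_add \<Rightarrow> 'e) \<Rightarrow> ('e \<Rightarrow> 'e) \<Rightarrow> bool"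
  where "bundle_endo sm F \<longleftrightarrow> (\<forall>x y. F (x + y) = F x + F y) \<and> (\<forall>f x. F (sm f x) = sm f (F x))"

definition orthogonal_endo :: "('e \<Rightarrow> 'e \<Rightarrow> 'f) \<Rightarrow> ('e \<Rightarrow> 'e) \<Rightarrow> bool"
  where "orthogonal_endo pr F \<longleftrightarrow> (\<forall>x y. pr (F x) (F y) = pr x y)"

definition almost_hypercomplex ::
  "('f \<Rightarrow> 'e::ab_group_add \<Rightarrow> 'e) \<Rightarrow> ('e \<Rightarrow> 'e \<Rightarrow> 'f) \<Rightarrow> ('e \<Rightarrow> 'e) \<Rightarrow> ('e \<Rightarrow> 'e) \<Rightarrow> ('e \<Rightarrow> 'e) \<Rightarrow> bool"
  where "almost_hypercomplex sm pr I J K \<longleftrightarrow>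
    bundle_endo sm I \<and> bundle_endo sm J \<and> bundle_endo sm K \<and>
    orthogonal_endo pr I \<and> orthogonal_endo pr J \<and> orthogonal_endo pr K \<and>
    (\<forall>x. I (I x) = - x) \<and> (\<forall>x. J (J x) = - x) \<and> (\<forall>x. K (K x) = - x) \<and>
    (\<forall>x. I (J (K x)) = - x)"

definition nijenhuis :: "('e::ab_group_add \<Rightarrow> 'e \<Rightarrow> 'e) \<Rightarrow> ('e \<Rightarrow> 'e) \<Rightarrow> ('e \<Rightarrow> 'e) \<Rightarrow> 'e \<Rightarrow> 'e \<Rightarrow> 'e"
  where "nijenhuis dor F G X Y =
    dor (F X) (G Y) - F (dor X (G Y)) - G (dor (F X) Y) + F (G (dor X Y))
    + dor (G X) (F Y) - G (dor X (F Y)) - F (dor (G X) Y) + G (F (dor X Y))"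

definition nijenhuis_zero :: "('e::ab_group_add \<Rightarrow> 'e \<Rightarrow> 'e) \<Rightarrow> ('e \<Rightarrow> 'e) \<Rightarrow> ('e \<Rightarrow> 'e) \<Rightarrow> bool"
  where "nijenhuis_zero dor F G \<longleftrightarrow> (\<forall>X Y. nijenhuis dor F G X Y = 0)"

end

theory Submission
  imports Defs
begin

(* The theorem is purely algebraic: of the Courant algebroid axioms only the
   biadditivity of the Dorfman bracket is used, and of the almost hypercomplex
   structure only the additivity of I, J, K and the quaternion relations.  In it we
     (1) derive the full quaternion multiplication table;
     (2) prove three expansions of Nijenhuis concomitants:
         N_{I,I} and N_{J,K} are combinations of values of N_{I,J}, and
         4 N_{I,J} is a combination of values of N_{I,I} and N_{J,J};
     (3) note that the cyclic shift (J, K, I) is again such a structure.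
   Applying (2) to (I,J,K), (J,K,I) and (K,I,J) shows that N_{I,J} = 0 forces
   all six concomitants to vanish; conversely N_{I,I} = N_{J,J} = 0 gives
   4 N_{I,J} = 0, hence N_{I,J} = 0 in a real vector space. *)

locale hypercomplex_bracket =
  I: additive I + J: additive J + K: additive K
  for I J K :: "'e::ab_group_add \<Rightarrow> 'e" +
  fixes dor :: "'e \<Rightarrow> 'e \<Rightarrow> 'e"
  assumes dor_add_left: "dor (x + y) z = dor x z + dor y z"
    and dor_add_right: "dor x (y + z) = dor x y + dor x z"
    and I_sq: "I (I x) = - x" and J_sq: "J (J x) = - x" and K_sq: "K (K x) = - x"
    and IJK: "I (J (K x)) = - x"
begin

lemma dor_minus_left: "dor (- x) z = - dor x z"
  and dor_minus_right: "dor z (- x) = - dor z x"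
  and dor_diff_left: "dor (x - y) z = dor x z - dor y z"
  and dor_diff_right: "dor z (x - y) = dor z x - dor z y"
proof -
  interpret L: additive "\<lambda>x. dor x z" by standard (rule dor_add_left)
  interpret R: additive "dor z" by standard (rule dor_add_right)
  show "dor (- x) z = - dor x z" "dor z (- x) = - dor z x"
    "dor (x - y) z = dor x z - dor y z" "dor z (x - y) = dor z x - dor z y"
    by (rule L.minus R.minus L.diff R.diff)+
qed

lemma IJ: "I (J x) = K x"
  using IJK[of "K x"] by (simp add: K_sq I.minus J.minus)

lemma IK: "I (K x) = - J x"
  using arg_cong[OF IJ, of I] by (simp add: I_sq)

lemma KJ: "K (J x) = - I x"
  using IJ[of "J x"] by (simp add: J_sq I.minus)

lemma JK: "J (K x) = I x"
proof -
  have "J (K x) = - I (I (J (K x)))" by (simp only: I_sq minus_minus)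
  also have "\<dots> = I x" by (simp add: IJK I.minus)
  finally show ?thesis .
qed

lemma JI: "J (I x) = - K x"
proof -
  have "J (I x) = J (J (K x))" by (simp only: JK)
  then show ?thesis by (simp only: J_sq)
qed

lemma KI: "K (I x) = J x"
proof -
  have "K (I x) = K (J (K x))" by (simp only: JK)
  also have "\<dots> = J x" by (simp only: KJ IK minus_minus)
  finally show ?thesis .
qed

lemmas normalization_rules = IJ IK JK KJ JI KI I_sq J_sq K_sq
  I.minus J.minus K.minus I.diff J.diff K.diff I.add J.add K.add
  dor_add_left dor_add_right dor_minus_left dor_minus_right dor_diff_left dor_diff_right

lemma cyclic_shift: "hypercomplex_bracket J K I dor"
  by unfold_locales (simp_all add: dor_add_left dor_add_right I_sq J_sq K_sq JK I.add)

lemma nijenhuis_II_expansion: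
  "nijenhuis dor I I X Y = nijenhuis dor I J X (K Y) - nijenhuis dor I J (I X) (J Y)
     + I (nijenhuis dor I J X (J Y)) + I (nijenhuis dor I J (I X) (K Y))"
  by (simp add: nijenhuis_def normalization_rules algebra_simps)

lemma nijenhuis_JK_expansion:
  "nijenhuis dor J K X Y = J (nijenhuis dor I J (J X) (J Y))"
  by (simp add: nijenhuis_def normalization_rules algebra_simps)

lemma nijenhuis_IJ_expansion:
  "nijenhuis dor I J X Y + nijenhuis dor I J X Y + nijenhuis dor I J X Y + nijenhuis dor I J X Y =
     - nijenhuis dor I I X (K Y) - nijenhuis dor I I (J X) (I Y)
     + J (nijenhuis dor I I X (I Y)) - J (nijenhuis dor I I (J X) (K Y))
     + nijenhuis dor J J X (K Y) - nijenhuis dor J J (I X) (J Y)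
     + I (nijenhuis dor J J X (J Y)) + I (nijenhuis dor J J (I X) (K Y))"
  by (simp add: nijenhuis_def normalization_rules algebra_simps)

lemma nijenhuis_II_vanishes:
  "nijenhuis_zero dor I J \<Longrightarrow> nijenhuis_zero dor I I"
  by (simp add: nijenhuis_zero_def nijenhuis_II_expansion I.zero)

lemma nijenhuis_JK_vanishes:
  "nijenhuis_zero dor I J \<Longrightarrow> nijenhuis_zero dor J K"
  by (simp add: nijenhuis_zero_def nijenhuis_JK_expansion J.zero)

lemma nijenhuis_IJ_fourfold_vanishes:
  assumes "nijenhuis_zero dor I I" and "nijenhuis_zero dor J J"
  shows "nijenhuis dor I J X Y + nijenhuis dor I J X Y + nijenhuis dor I J X Y
           + nijenhuis dor I J X Y = 0"
  using assms by (simp add: nijenhuis_zero_def nijenhuis_IJ_expansion I.zero J.zero)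

theorem nijenhuis_all_vanish:
  assumes "nijenhuis_zero dor I J"
  shows "nijenhuis_zero dor I I \<and> nijenhuis_zero dor J J \<and> nijenhuis_zero dor K K \<and>
         nijenhuis_zero dor J K \<and> nijenhuis_zero dor K I"
proof -
  interpret JKI: hypercomplex_bracket J K I dor by (rule cyclic_shift)
  interpret KIJ: hypercomplex_bracket K I J dor by (rule JKI.cyclic_shift)
  have JK0: "nijenhuis_zero dor J K" using assms by (rule nijenhuis_JK_vanishes)
  have KI0: "nijenhuis_zero dor K I" using JK0 by (rule JKI.nijenhuis_JK_vanishes)
  show ?thesis
    using assms JK0 KI0 nijenhuis_II_vanishes JKI.nijenhuis_II_vanishes
      KIJ.nijenhuis_II_vanishes by blast
qed

end

lemma nijenhuis_IJ_vanishes: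
  fixes dor :: "'e::real_vector \<Rightarrow> 'e \<Rightarrow> 'e" and I J K :: "'e \<Rightarrow> 'e"
  assumes "hypercomplex_bracket I J K dor"
    and "nijenhuis_zero dor I I" and "nijenhuis_zero dor J J"
  shows "nijenhuis_zero dor I J"
  unfolding nijenhuis_zero_def
proof (intro allI)
  fix X Y
  let ?N = "nijenhuis dor I J X Y"
  have "?N + ?N + ?N + ?N = 0"
    using hypercomplex_bracket.nijenhuis_IJ_fourfold_vanishes[OF assms] .
  moreover have "?N + ?N + ?N + ?N = (1 + 1 + 1 + 1 :: real) *\<^sub>R ?N"
    by (simp only: scaleR_add_left scaleR_one)
  ultimately show "?N = 0" by simp
qed

theorem mainTheorem9:
  fixes sm :: "'f::{comm_ring_1,real_algebra_1} \<Rightarrow> 'e::real_vector \<Rightarrow> 'e"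
    and rho :: "'e \<Rightarrow> 'f \<Rightarrow> 'f" and pr :: "'e \<Rightarrow> 'e \<Rightarrow> 'f"
    and dor :: "'e \<Rightarrow> 'e \<Rightarrow> 'e" and I J K :: "'e \<Rightarrow> 'e"
  assumes "courant_algebroid sm rho pr dor"
    and "almost_hypercomplex sm pr I J K"
  shows "((nijenhuis_zero dor I I \<and> nijenhuis_zero dor J J) \<longleftrightarrow> nijenhuis_zero dor I J)
       \<and> (nijenhuis_zero dor I J \<longleftrightarrow>
           (nijenhuis_zero dor I I \<and> nijenhuis_zero dor J J \<and> nijenhuis_zero dor K K \<and>
            nijenhuis_zero dor I J \<and> nijenhuis_zero dor J K \<and> nijenhuis_zero dor K I))"
proof -
  have H: "hypercomplex_bracket I J K dor"
  proof unfold_locales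
    show "\<And>x y z. dor (x + y) z = dor x z + dor y z" "\<And>x y z. dor x (y + z) = dor x y + dor x z"
      using assms(1) by (simp_all add: courant_algebroid_def)
  qed (use assms(2) in \<open>simp_all add: almost_hypercomplex_def bundle_endo_def\<close>)
  show ?thesis
    using nijenhuis_IJ_vanishes[OF H] hypercomplex_bracket.nijenhuis_all_vanish[OF H] by blast
qed

end
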